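(* Let $X$ be a real Hilbert space and let $A,B$ be closed convex nonempty subsets of $X$ such that $A\cap B$ is bounded and nonempty. Suppose the couple $(A,B)$ is regular. Then for every choice of sequences $\{A_n\},\{B_n\}$ of closed convex nonempty subsets of $X$ converging in the Attouch–Wets sense to $A$ and $B$ respectively, and every $a_0\in X$, the perturbed alternating projections sequences $\{a_n\},\{b_n\}$ satisfy $\mathrm{dist}(a_n,A\cap B)\to0$ and $\mathrm{dist}(b_n,A\cap B)\to0$.
   Context: $P_C$ is the metric projection onto a closed convex nonempty set $C$; $B_X$ the closed unit ball; $\mathrm{dist}(x,S)=\inf_{s\in S}\|x-s\|$. Since $A\cap B\neq\emptyset$, regularity of $(A,B)$ means: for each $\epsilon>0$ there is $\delta>0$ such that $\mathrm{dist}(x,A\cap B)\le\epsilon$ whenever $x\in X$ and $\max\{\mathrm{dist}(x,A),\mathrm{dist}(x,B)\}\le\delta$. Attouch–Wets convergence: for nonempty closed $C,D$ and $N\in\mathbb N$ let $e_N(C,D)=\sup_{c\in C\cap NB_X}\mathrm{dist}(c,D)$ ($0$ if $C\cap NB_X=\emptyset$) and $h_N(C,D)=\max\{e_N(C,D),e_N(D,C)\}$; $C_j\to C$ if $\lim_j h_N(C_j,C)=0$ for every $N\in\mathbb N$. The perturbed alternating projections sequences with starting point $a_0$ are defined by $b_n=P_{B_n}(a_{n-1})$ and $a_n=P_{A_n}(b_n)$ for $n\in\mathbb N$. *)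

theory Defs
  imports "HOL-Analysis.Analysis"
begin

text \<open>Metric projection onto a set (in a real Hilbert space, for closed convex nonempty C
  the nearest point exists and is unique, so this picks it).\<close>
definition metric_proj :: "'a::real_inner set \<Rightarrow> 'a \<Rightarrow> 'a" where
  "metric_proj C x = (SOME p. p \<in> C \<and> (\<forall>y\<in>C. dist x p \<le> dist x y))"

definition regular_couple :: "'a::real_normed_vector set \<Rightarrow> 'a set \<Rightarrow> bool" where
  "regular_couple A B \<longleftrightarrow>
     (\<forall>\<epsilon>>0. \<exists>\<delta>>0. \<forall>x. max (infdist x A) (infdist x B) \<le> \<delta> \<longrightarrow> infdist x (A \<inter> B) \<le> \<epsilon>)"

definition aw_excess :: "nat \<Rightarrow> 'a::real_normed_vector set \<Rightarrow> 'a set \<Rightarrow> real" where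
  "aw_excess N C D =
     (if C \<inter> cball 0 (real N) = {} then 0
      else (SUP c \<in> C \<inter> cball 0 (real N). infdist c D))"

definition aw_dist :: "nat \<Rightarrow> 'a::real_normed_vector set \<Rightarrow> 'a set \<Rightarrow> real" where
  "aw_dist N C D = max (aw_excess N C D) (aw_excess N D C)"

definition aw_converges :: "(nat \<Rightarrow> 'a::real_normed_vector set) \<Rightarrow> 'a set \<Rightarrow> bool" where
  "aw_converges Cs C \<longleftrightarrow> (\<forall>N::nat. N \<ge> 1 \<longrightarrow> (\<lambda>j. aw_dist N (Cs j) C) \<longlonglongrightarrow> 0)"

end

theory Submission
  imports Defs
begin

(*
  Merge a and b into one sequence x with x (k + 1) the projection of x k onto S (k + 1), where
  S k converges in the Attouch-Wets sense to T k and T k alternates between A and B.  Everything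
  rests on the Pythagoras inequality |P x - y|^2 + |x - P x|^2 <= |x - y|^2 for y in the set.

  Fix p in the bounded set A \<inter> B.  When x k is far from p, shrinking the
  configuration towards p and applying regularity shows that the step from x k to x (k + 1) is
  long compared with |x k - p|; a long projection step onto a set passing close to p does not
  increase the distance to p.  So the iterates eventually stay in a fixed ball.

  Inside that ball, if the distance from x k to A \<inter> B exceeds \<epsilon>, regularity
  forces a step of length about \<delta>, and the Pythagoras inequality at a point of S (k + 1) near
  A \<inter> B lowers the distance to A \<inter> B by an amount of order \<delta>^2, whereas the perturbations
  raise it by at most O(\<eta>).  Hence the distance eventually stays below \<epsilon>.
*)

section \<open>Metric projections in Hilbert spaces\<close>

lemma infdist_lessE:
  assumes "S \<noteq> {}" "infdist x S < e"
  obtains y where "y \<in> S" "dist x y < e"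
  using assms by (auto simp: infdist_notempty cINF_less_iff)

lemma parallelogram_law:
  fixes u v :: "'a::real_inner"
  shows "(norm (u + v))\<^sup>2 + (norm (u - v))\<^sup>2 = 2 * (norm u)\<^sup>2 + 2 * (norm v)\<^sup>2"
  by (simp add: power2_norm_eq_inner inner_add_left inner_add_right inner_diff_left
      inner_diff_right inner_commute)

lemma convex_dist_sq_le_infdist:
  fixes x :: "'a::real_inner"
  assumes "convex S" "s \<in> S" "t \<in> S"
  shows "(dist s t)\<^sup>2 \<le> 2 * (dist x s)\<^sup>2 + 2 * (dist x t)\<^sup>2 - 4 * (infdist x S)\<^sup>2"
proof -
  have "midpoint s t \<in> S"
    using convexD[OF assms, of "1/2" "1/2"] by (simp add: midpoint_def scaleR_add_right)
  then have "infdist x S \<le> dist x (midpoint s t)"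
    by (rule infdist_le)
  moreover have "(x - s) + (x - t) = 2 *\<^sub>R (x - midpoint s t)"
    by (simp add: midpoint_def algebra_simps scaleR_2)
  ultimately have "infdist x S \<le> norm ((x - s) + (x - t)) / 2"
    by (simp add: dist_norm)
  then have "(2 * infdist x S)\<^sup>2 \<le> (norm ((x - s) + (x - t)))\<^sup>2"
    by (intro power_mono) (auto simp: infdist_nonneg)
  then show ?thesis
    using parallelogram_law[of "x - s" "x - t"]
    by (simp add: dist_norm norm_minus_commute power_mult_distrib)
qed

lemma convex_minimizing_sequence_Cauchy:
  fixes x :: "'a::real_inner"
  assumes "convex S" "\<And>n. s n \<in> S" "\<And>n. (dist x (s n))\<^sup>2 < (infdist x S)\<^sup>2 + 1 / Suc n"
  shows "Cauchy s"
proof (rule metric_CauchyI)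
  fix e :: real
  assume "0 < e"
  then obtain M where M: "inverse (Suc M) < e\<^sup>2 / 4"
    using reals_Archimedean[of "e\<^sup>2 / 4"] by auto
  have "dist (s m) (s n) < e" if "M \<le> m" "M \<le> n" for m n
  proof -
    have "1 / Suc m \<le> inverse (Suc M)" "1 / Suc n \<le> inverse (Suc M)"
      using that by (auto simp: inverse_eq_divide intro!: divide_left_mono)
    then have "(dist (s m) (s n))\<^sup>2 < e\<^sup>2"
      using convex_dist_sq_le_infdist[OF assms(1,2,2), of m n x] assms(3)[of m] assms(3)[of n] M
      by linarith
    then show ?thesis
      using \<open>0 < e\<close> by (simp add: power2_less_imp_less)
  qed
  then show "\<exists>M. \<forall>m\<ge>M. \<forall>n\<ge>M. dist (s m) (s n) < e"
    by blast
qed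

lemma nearest_point_exists:
  fixes x :: "'a::{real_inner,complete_space}"
  assumes "closed S" "convex S" "S \<noteq> {}"
  obtains p where "p \<in> S" "\<And>y. y \<in> S \<Longrightarrow> dist x p \<le> dist x y"
proof -
  define d where "d = infdist x S"
  have "\<exists>y\<in>S. (dist x y)\<^sup>2 < d\<^sup>2 + 1 / Suc n" for n
  proof -
    have "infdist x S < sqrt (d\<^sup>2 + 1 / Suc n)"
      unfolding d_def by (rule real_less_rsqrt) simp
    then obtain y where y: "y \<in> S" "dist x y < sqrt (d\<^sup>2 + 1 / Suc n)"
      by (rule infdist_lessE[OF assms(3)])
    then have "(dist x y)\<^sup>2 < d\<^sup>2 + 1 / Suc n"
      using power_strict_mono[OF y(2) zero_le_dist, of 2] by simp
    then show ?thesis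
      using y(1) by blast
  qed
  then obtain s where s: "\<And>n. s n \<in> S" "\<And>n. (dist x (s n))\<^sup>2 < d\<^sup>2 + 1 / Suc n"
    by metis
  then obtain p where p: "s \<longlonglongrightarrow> p"
    using convex_minimizing_sequence_Cauchy[OF assms(2), of s x] unfolding d_def
    by (metis Cauchy_convergent_iff convergent_def)
  have "p \<in> S"
    using closed_sequentially[OF assms(1) _ p] s(1) by blast
  moreover have "(dist x p)\<^sup>2 \<le> d\<^sup>2"
  proof (rule LIMSEQ_le)
    show "(\<lambda>n. (dist x (s n))\<^sup>2) \<longlonglongrightarrow> (dist x p)\<^sup>2"
      by (intro tendsto_intros p)
    show "(\<lambda>n. d\<^sup>2 + 1 / Suc n) \<longlonglongrightarrow> d\<^sup>2"
      using tendsto_add[OF tendsto_const LIMSEQ_inverse_real_of_nat, of "d\<^sup>2"]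
      by (simp add: inverse_eq_divide)
    show "\<exists>N. \<forall>n\<ge>N. (dist x (s n))\<^sup>2 \<le> d\<^sup>2 + 1 / Suc n"
      using s(2) less_imp_le by blast
  qed
  then have "dist x p \<le> d"
    by (rule power2_le_imp_le) (simp add: d_def infdist_nonneg)
  ultimately show ?thesis
    using that infdist_le[of _ S x] unfolding d_def by (meson order_trans)
qed

lemma
  fixes x :: "'a::{real_inner,complete_space}"
  assumes "closed S" "convex S" "S \<noteq> {}"
  shows metric_proj_in: "metric_proj S x \<in> S"
    and metric_proj_le: "y \<in> S \<Longrightarrow> dist x (metric_proj S x) \<le> dist x y"
proof -
  have "metric_proj S x \<in> S \<and> (\<forall>y\<in>S. dist x (metric_proj S x) \<le> dist x y)"
    unfolding metric_proj_def
    by (rule someI_ex) (meson nearest_point_exists[OF assms])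
  then show "metric_proj S x \<in> S" "y \<in> S \<Longrightarrow> dist x (metric_proj S x) \<le> dist x y"
    by auto
qed

lemma metric_proj_pythagoras:
  fixes x :: "'a::{real_inner,complete_space}"
  assumes "closed S" "convex S" "S \<noteq> {}" "y \<in> S"
  shows "(dist (metric_proj S x) y)\<^sup>2 + (dist x (metric_proj S x))\<^sup>2 \<le> (dist x y)\<^sup>2"
proof -
  let ?p = "metric_proj S x"
  have "inner (x - ?p) (y - ?p) \<le> 0"
    using any_closest_point_dot[OF assms(2,1) metric_proj_in[OF assms(1-3)] assms(4)]
      metric_proj_le[OF assms(1-3)] by blast
  moreover have "x - y = (x - ?p) - (y - ?p)"
    by simp
  ultimately show ?thesis
    by (simp add: dist_norm norm_minus_commute[of ?p y] power2_norm_eq_inner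
        inner_diff_left inner_diff_right inner_commute)
qed

lemma metric_proj_dist_le:
  fixes x :: "'a::{real_inner,complete_space}"
  assumes "closed S" "convex S" "S \<noteq> {}" "y \<in> S"
  shows "dist (metric_proj S x) y \<le> dist x y"
proof (rule power2_le_imp_le)
  show "(dist (metric_proj S x) y)\<^sup>2 \<le> (dist x y)\<^sup>2"
    using metric_proj_pythagoras[OF assms, of x] zero_le_power2[of "dist x (metric_proj S x)"]
    by linarith
qed simp

lemma metric_proj_no_farther_if_long_step:
  fixes x p q :: "'a::{real_inner,complete_space}"
  assumes "closed S" "convex S" "S \<noteq> {}" "q \<in> S" "dist q p \<le> \<eta>"
    and "\<eta> \<le> dist x p" "4 * \<eta> * dist x p \<le> (dist x (metric_proj S x))\<^sup>2"
  shows "dist (metric_proj S x) p \<le> dist x p"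
proof -
  define \<rho> where "\<rho> = dist x p"
  have "dist x q \<le> \<rho> + \<eta>"
    using dist_triangle[of x q p] assms(5) by (simp add: \<rho>_def dist_commute)
  then have "(dist x q)\<^sup>2 \<le> (\<rho> + \<eta>)\<^sup>2"
    by (simp add: power_mono)
  then have "(dist (metric_proj S x) q)\<^sup>2 \<le> (\<rho> - \<eta>)\<^sup>2"
    using metric_proj_pythagoras[OF assms(1-4), of x] assms(7)
    by (simp add: \<rho>_def power2_eq_square algebra_simps)
  then have "dist (metric_proj S x) q \<le> \<rho> - \<eta>"
    by (rule power2_le_imp_le) (use assms(6) in \<open>simp add: \<rho>_def\<close>)
  then show ?thesis
    using dist_triangle[of "metric_proj S x" p q] assms(5) by (simp add: \<rho>_def)
qed

section \<open>Attouch-Wets excess and regularity\<close>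

lemma infdist_le_aw_excess:
  fixes S T :: "'a::real_normed_vector set"
  assumes "z \<in> S" "norm z \<le> real N"
  shows "infdist z T \<le> aw_excess N S T"
proof (cases "T = {}")
  case True
  then show ?thesis
    using assms by (auto simp: aw_excess_def infdist_def)
next
  case False
  then obtain t where "t \<in> T"
    by blast
  have "infdist c T \<le> real N + norm t" if "c \<in> S \<inter> cball 0 (real N)" for c
  proof -
    have "infdist c T \<le> norm c + norm t"
      using infdist_le[OF \<open>t \<in> T\<close>, of c] norm_triangle_ineq4[of c t] by (simp add: dist_norm)
    then show ?thesis
      using that by simp
  qed
  then have "bdd_above ((\<lambda>c. infdist c T) ` (S \<inter> cball 0 (real N)))"
    by (rule bdd_aboveI2)
  moreover have "z \<in> S \<inter> cball 0 (real N)"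
    using assms by simp
  ultimately show ?thesis
    unfolding aw_excess_def by (auto intro: cSUP_upper)
qed

lemma aw_dist_commute: "aw_dist N S T = aw_dist N T S"
  by (simp add: aw_dist_def max.commute)

lemma infdist_less_if_aw_dist_less:
  fixes S T :: "'a::real_normed_vector set"
  assumes "aw_dist N S T < \<eta>" "z \<in> S" "norm z \<le> real N"
  shows "infdist z T < \<eta>"
  using infdist_le_aw_excess[OF assms(2,3), of T] assms(1) by (simp add: aw_dist_def)

lemma infdist_le_if_regular:
  assumes "\<forall>z. max (infdist z U) (infdist z V) \<le> \<delta> \<longrightarrow> infdist z C \<le> \<epsilon>"
    and "infdist z U \<le> \<eta>" "infdist w V \<le> \<eta>" "\<eta> + dist z w \<le> \<delta>"
  shows "infdist z C \<le> \<epsilon>"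
proof -
  have "infdist z V \<le> \<eta> + dist z w"
    using infdist_triangle[of z V w] assms(3) by simp
  then show ?thesis
    using assms by (smt (verit) zero_le_dist max.bounded_iff)
qed

lemma dist_le_infdist_add_radius:
  assumes "C \<noteq> {}" "C \<subseteq> cball p R"
  shows "dist z p \<le> infdist z C + R"
proof -
  have "dist z p - R \<le> infdist z C"
    unfolding infdist_notempty[OF assms(1)]
  proof (rule cINF_greatest[OF assms(1)])
    fix c assume "c \<in> C"
    then show "dist z p - R \<le> dist z c"
      using assms(2) dist_triangle[of z p c] by (auto simp: dist_commute)
  qed
  then show ?thesis
    by simp
qed

lemma dist_le_if_near_pair:
  fixes p :: "'a::real_normed_vector"
  assumes C: "C \<noteq> {}" "C \<subseteq> cball p R"
    and regular: "\<forall>z. max (infdist z U) (infdist z V) \<le> \<delta> \<longrightarrow> infdist z C \<le> \<epsilon>"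
    and near: "aw_excess N S1 U \<le> \<eta>" "aw_excess N S2 V \<le> \<eta>"
    and z: "z1 \<in> S1" "z2 \<in> S2" "norm z1 \<le> real N" "norm z2 \<le> real N" "\<eta> + dist z1 z2 \<le> \<delta>"
  shows "dist z1 p \<le> R + \<epsilon>"
proof -
  have "infdist z1 C \<le> \<epsilon>"
    using infdist_le_if_regular[OF regular _ _ z(5)] near
      infdist_le_aw_excess[OF z(1,3), of U] infdist_le_aw_excess[OF z(2,4), of V]
    by linarith
  then show ?thesis
    using dist_le_infdist_add_radius[OF C, of z1] by simp
qed

section \<open>A single perturbed projection step\<close>

lemma dist_convex_combination_le:
  fixes a b c d :: "'a::real_normed_vector"
  assumes "0 \<le> t" "t \<le> 1"
  shows "dist ((1 - t) *\<^sub>R a + t *\<^sub>R b) ((1 - t) *\<^sub>R c + t *\<^sub>R d)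
    \<le> (1 - t) * dist a c + t * dist b d"
proof -
  have "(1 - t) *\<^sub>R a + t *\<^sub>R b - ((1 - t) *\<^sub>R c + t *\<^sub>R d) = (1 - t) *\<^sub>R (a - c) + t *\<^sub>R (b - d)"
    by (simp add: algebra_simps)
  then show ?thesis
    using norm_triangle_ineq[of "(1 - t) *\<^sub>R (a - c)" "t *\<^sub>R (b - d)"] assms
    by (simp add: dist_norm)
qed

lemma le_sub_if_sum_squares_le:
  fixes a b s Q :: real
  assumes "0 \<le> b" "b\<^sup>2 + s\<^sup>2 \<le> a\<^sup>2" "0 \<le> a" "a \<le> Q"
  shows "b \<le> a - s\<^sup>2 / (2 * Q)"
proof (cases "Q = 0")
  case False
  define u where "u = s\<^sup>2 / (2 * Q)"
  have Q: "0 < Q"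
    using False assms(3,4) by simp
  have "s\<^sup>2 \<le> a * Q"
    using assms(2-4) by (smt (verit) mult_mono power2_eq_square zero_le_power2)
  then have "u \<le> a / 2"
    using Q by (simp add: u_def pos_divide_le_eq mult.commute)
  have "a * s\<^sup>2 \<le> Q * s\<^sup>2"
    using assms(4) by (simp add: mult_right_mono)
  then have "2 * a * u \<le> s\<^sup>2"
    using Q by (simp add: u_def field_simps)
  then have "b\<^sup>2 \<le> (a - u)\<^sup>2"
    using assms(2) by (smt (verit) power2_diff zero_le_power2)
  then show ?thesis
    using \<open>u \<le> a / 2\<close> assms(3) power2_le_imp_le[of b "a - u"] by (simp add: u_def)
qed (use assms in \<open>simp add: sum_power2_le_zero_iff\<close>)

lemma dist_convex_combination_near:
  fixes p q v :: "'a::real_normed_vector"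
  assumes "0 \<le> t" "t \<le> 1" "dist q p \<le> \<eta>"
  shows "dist ((1 - t) *\<^sub>R q + t *\<^sub>R v) p \<le> t * dist v p + \<eta>"
    and "t * dist v p \<le> dist ((1 - t) *\<^sub>R q + t *\<^sub>R v) p + \<eta>"
proof -
  define w where "w = (1 - t) *\<^sub>R p + t *\<^sub>R v"
  have "dist ((1 - t) *\<^sub>R q + t *\<^sub>R v) w \<le> (1 - t) * dist q p"
    using dist_convex_combination_le[OF assms(1,2), of q v p v] by (simp add: w_def)
  also have "\<dots> \<le> \<eta>"
    using assms by (smt (verit) mult_left_le_one_le zero_le_dist)
  finally have zw: "dist ((1 - t) *\<^sub>R q + t *\<^sub>R v) w \<le> \<eta>" .
  have "w - p = t *\<^sub>R (v - p)"
    by (simp add: w_def algebra_simps)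
  then have wp: "dist w p = t * dist v p"
    using assms(1) by (simp add: dist_norm)
  show "dist ((1 - t) *\<^sub>R q + t *\<^sub>R v) p \<le> t * dist v p + \<eta>"
    using dist_triangle[of _ p w] zw wp by (smt (verit))
  show "t * dist v p \<le> dist ((1 - t) *\<^sub>R q + t *\<^sub>R v) p + \<eta>"
    using dist_triangle[of w p "(1 - t) *\<^sub>R q + t *\<^sub>R v"] zw wp by (simp add: dist_commute)
qed

lemma metric_proj_step_long:
  fixes x p p1 p2 :: "'a::{real_inner,complete_space}"
  assumes S1: "convex S1" "x \<in> S1" "p1 \<in> S1"
    and S2: "closed S2" "convex S2" "S2 \<noteq> {}" "p2 \<in> S2"
    and C: "C \<noteq> {}" "C \<subseteq> cball p R"
    and regular: "\<forall>z. max (infdist z U) (infdist z V) \<le> \<delta> \<longrightarrow> infdist z C \<le> 1"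
    and near: "aw_excess N S1 U < \<eta>" "aw_excess N S2 V < \<eta>" "dist p1 p \<le> \<eta>" "dist p2 p \<le> \<eta>"
    and N: "norm p + R + 4 \<le> real N"
    and \<eta>: "\<eta> \<le> 1/4" "\<eta> \<le> \<delta>/6"
    and far: "R + 4 \<le> dist x p"
  shows "\<delta> / (2 * (R + 3)) * dist x p \<le> dist x (metric_proj S2 x)"
proof (rule ccontr)
  \<comment> \<open>If the step were short, shrinking x towards p by the factor t = (R + 3) / dist x p would
    give a point close to both S1 and S2, hence within 1 of C by regularity, but at distance
    about R + 3 from p.\<close>
  define L \<rho> y where "L = R + 3" and "\<rho> = dist x p" and "y = metric_proj S2 x"
  define t where "t = L / \<rho>"
  assume "\<not> ?thesis"
  then have "dist x y < \<delta> / (2 * L) * \<rho>"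
    by (simp add: L_def \<rho>_def y_def)
  have "0 \<le> \<eta>"
    using near(3) zero_le_dist order_trans by blast
  have "0 \<le> R"
    using C by (auto dest: subsetD)
  moreover have "0 < \<rho>"
    unfolding \<rho>_def using \<open>0 \<le> R\<close> far by linarith
  ultimately have t: "0 < t" "t \<le> 1" "t * \<rho> = L"
    using far by (simp_all add: t_def L_def \<rho>_def field_simps)
  then have "t * dist x y < t * (\<delta> / (2 * L) * \<rho>)"
    using mult_strict_left_mono[OF \<open>dist x y < \<delta> / (2 * L) * \<rho>\<close>] by simp
  also have "\<dots> = \<delta> / 2"
    using t \<open>0 \<le> R\<close> by (simp add: L_def field_simps)
  finally have "t * dist x y < \<delta> / 2" .
  have t0: "0 \<le> t"
    using t(1) by simp
  define z1 z2 where "z1 = (1 - t) *\<^sub>R p1 + t *\<^sub>R x" and "z2 = (1 - t) *\<^sub>R p2 + t *\<^sub>R y"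
  have "z1 \<in> S1" "z2 \<in> S2"
    using t convexD_alt[OF S1(1,3,2)] convexD_alt[OF S2(2,4) metric_proj_in[OF S2(1-3)]]
    by (simp_all add: z1_def z2_def y_def)
  have "dist y p \<le> \<rho> + 2 * \<eta>"
    using metric_proj_dist_le[OF S2, of x] dist_triangle[of y p p2] dist_triangle[of x p2 p] near(4)
    by (simp add: y_def \<rho>_def dist_commute)
  then have "t * dist y p \<le> t * (\<rho> + 2 * \<eta>)"
    using t by (simp add: mult_left_mono)
  also have "\<dots> \<le> L + 2 * \<eta>"
    using t \<open>0 \<le> \<eta>\<close> mult_left_le_one_le[of \<eta> t] by (simp add: algebra_simps)
  finally have "norm z2 \<le> real N"
    using dist_convex_combination_near(1)[OF t0 t(2) near(4), of y] norm_triangle_sub[of z2 p]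
      N \<eta> by (simp add: z2_def L_def dist_norm)
  have "norm z1 \<le> real N" "L \<le> dist z1 p + \<eta>"
    using dist_convex_combination_near[OF t0 t(2) near(3), of x] norm_triangle_sub[of z1 p]
      N \<eta> t(3) by (simp_all add: z1_def L_def \<rho>_def dist_norm)
  have "dist p1 p2 \<le> 2 * \<eta>"
    using dist_triangle[of p1 p2 p] near(3,4) by (simp add: dist_commute)
  moreover have "(1 - t) * dist p1 p2 \<le> dist p1 p2"
    using t by (simp add: mult_left_le_one_le)
  ultimately have "\<eta> + dist z1 z2 \<le> \<delta>"
    using dist_convex_combination_le[OF t0 t(2), of p1 x p2 y] \<eta>(2) \<open>t * dist x y < \<delta> / 2\<close>
    by (simp add: z1_def z2_def)
  then have "dist z1 p \<le> R + 1"
    by (rule dist_le_if_near_pair[OF C regular less_imp_le[OF near(1)] less_imp_le[OF near(2)]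
        \<open>z1 \<in> S1\<close> \<open>z2 \<in> S2\<close> \<open>norm z1 \<le> real N\<close> \<open>norm z2 \<le> real N\<close>])
  then show False
    using \<open>L \<le> dist z1 p + \<eta>\<close> \<eta>(1) by (simp add: L_def)
qed

lemma metric_proj_step_bounded:
  fixes x p p1 p2 :: "'a::{real_inner,complete_space}"
  assumes S1: "convex S1" "x \<in> S1" "p1 \<in> S1"
    and S2: "closed S2" "convex S2" "S2 \<noteq> {}" "p2 \<in> S2"
    and C: "C \<noteq> {}" "C \<subseteq> cball p R"
    and regular: "\<forall>z. max (infdist z U) (infdist z V) \<le> \<delta> \<longrightarrow> infdist z C \<le> 1"
    and near: "aw_excess N S1 U < \<eta>" "aw_excess N S2 V < \<eta>" "dist p1 p \<le> \<eta>" "dist p2 p \<le> \<eta>"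
    and N: "norm p + R + 4 \<le> real N"
    and \<eta>: "\<eta> \<le> 1/4" "\<eta> \<le> \<delta>/6" "4 * \<eta> \<le> (\<delta> / (2 * (R + 3)))\<^sup>2"
  shows "dist (metric_proj S2 x) p \<le> max (dist x p) (R + 5)"
proof (cases "R + 4 \<le> dist x p")
  case True
  define \<kappa> where "\<kappa> = \<delta> / (2 * (R + 3))"
  have "0 \<le> \<eta>" "0 \<le> R"
    using near(3) C zero_le_dist order_trans by (blast, auto dest: subsetD)
  then have "0 \<le> \<kappa>" "1 \<le> dist x p"
    using \<eta> True by (auto simp: \<kappa>_def)
  have "4 * \<eta> * dist x p \<le> \<kappa>\<^sup>2 * dist x p"
    using \<eta>(3) \<open>1 \<le> dist x p\<close> by (simp add: \<kappa>_def mult_right_mono)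
  also have "\<dots> \<le> \<kappa>\<^sup>2 * (dist x p)\<^sup>2"
    using \<open>1 \<le> dist x p\<close> mult_right_mono[of 1 "dist x p" "dist x p"]
    by (intro mult_left_mono) (simp_all add: power2_eq_square)
  also have "\<dots> = (\<kappa> * dist x p)\<^sup>2"
    by (simp add: power_mult_distrib)
  also have "\<dots> \<le> (dist x (metric_proj S2 x))\<^sup>2"
  proof (rule power_mono)
    show "\<kappa> * dist x p \<le> dist x (metric_proj S2 x)"
      unfolding \<kappa>_def by (rule metric_proj_step_long[OF S1 S2 C regular near N \<eta>(1,2) True])
  qed (use \<open>0 \<le> \<kappa>\<close> in simp)
  finally have "dist (metric_proj S2 x) p \<le> dist x p"
    using metric_proj_no_farther_if_long_step[OF S2 near(4)] \<eta>(1) True \<open>0 \<le> R\<close> by simp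
  then show ?thesis
    by simp
next
  case False
  have "dist (metric_proj S2 x) p \<le> dist x p + 2 * \<eta>"
    using metric_proj_dist_le[OF S2, of x] dist_triangle[of "metric_proj S2 x" p p2]
      dist_triangle[of x p2 p] near(4) by (simp add: dist_commute)
  then show ?thesis
    using False \<eta>(1) by simp
qed

lemma infdist_proxyE:
  assumes "C \<noteq> {}" "0 < \<eta>" "\<forall>c\<in>C. \<exists>c'\<in>S. dist c c' \<le> \<eta>"
  obtains c' where "c' \<in> S" "dist x c' < infdist x C + 2 * \<eta>" "\<And>y. infdist y C \<le> dist y c' + \<eta>"
proof -
  obtain c where c: "c \<in> C" "dist x c < infdist x C + \<eta>"
    using infdist_lessE[OF assms(1), of x "infdist x C + \<eta>"] assms(2) by auto
  then obtain c' where c': "c' \<in> S" "dist c c' \<le> \<eta>"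
    using assms(3) by blast
  have "dist x c' < infdist x C + 2 * \<eta>"
    using dist_triangle[of x c' c] c c' by simp
  moreover have "infdist y C \<le> dist y c' + \<eta>" for y
    using infdist_le[OF c(1), of y] dist_triangle[of y c c'] c' by (simp add: dist_commute)
  ultimately show ?thesis
    using that c'(1) by blast
qed

lemma metric_proj_infdist_le:
  fixes x :: "'a::{real_inner,complete_space}"
  assumes "closed S" "convex S" "S \<noteq> {}" "C \<noteq> {}" "0 < \<eta>"
    and "\<forall>c\<in>C. \<exists>c'\<in>S. dist c c' \<le> \<eta>"
  shows "infdist (metric_proj S x) C \<le> infdist x C + 3 * \<eta>"
proof -
  obtain c' where "c' \<in> S" "dist x c' < infdist x C + 2 * \<eta>"
    "infdist (metric_proj S x) C \<le> dist (metric_proj S x) c' + \<eta>"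
    using infdist_proxyE[OF assms(4-6)] by metis
  then show ?thesis
    using metric_proj_dist_le[OF assms(1-3) \<open>c' \<in> S\<close>, of x] by simp
qed

lemma metric_proj_infdist_decrease:
  fixes x :: "'a::{real_inner,complete_space}"
  assumes S: "closed S" "convex S" "S \<noteq> {}"
    and C: "C \<noteq> {}" "\<forall>c\<in>C. \<exists>c'\<in>S. dist c c' \<le> \<eta>"
    and regular: "\<forall>z. max (infdist z U) (infdist z V) \<le> \<delta> \<longrightarrow> infdist z C \<le> \<epsilon>"
    and near: "infdist x U \<le> \<eta>" "infdist (metric_proj S x) V \<le> \<eta>"
    and far: "\<epsilon> < infdist x C"
    and Q: "infdist x C + 1 \<le> Q"
    and \<eta>: "0 < \<eta>" "\<eta> \<le> 1/2" "\<eta> \<le> \<delta>/2" "\<eta> \<le> \<delta>\<^sup>2 / (48 * Q)"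
  shows "infdist (metric_proj S x) C \<le> infdist x C - \<delta>\<^sup>2 / (16 * Q)"
proof -
  \<comment> \<open>Regularity makes the step from x to its projection at least \<delta>/2 long; the Pythagoras
    inequality at a point c' of S close to C turns this into a decrease of order \<delta>^2.\<close>
  define y where "y = metric_proj S x"
  obtain c' where c': "c' \<in> S" "dist x c' < infdist x C + 2 * \<eta>" "infdist y C \<le> dist y c' + \<eta>"
    using infdist_proxyE[OF C(1) \<eta>(1) C(2)] by metis
  have "\<not> \<eta> + dist x y \<le> \<delta>"
    using infdist_le_if_regular[OF regular near[folded y_def]] far by linarith
  then have "\<delta> / 2 \<le> dist x y"
    using \<eta>(3) by linarith
  then have "\<delta>\<^sup>2 / 4 \<le> (dist x y)\<^sup>2"
    using \<eta> power_mono[of "\<delta> / 2" "dist x y" 2] by (simp add: power_divide)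
  moreover have "dist y c' \<le> dist x c' - (dist x y)\<^sup>2 / (2 * Q)"
    using le_sub_if_sum_squares_le[OF zero_le_dist metric_proj_pythagoras[OF S c'(1)] zero_le_dist]
      c'(2) Q \<eta>(2) by (simp add: y_def)
  moreover have "0 < Q"
    using Q infdist_nonneg[of x C] by linarith
  ultimately have "dist y c' \<le> dist x c' - \<delta>\<^sup>2 / (8 * Q)"
    using divide_right_mono[of "\<delta>\<^sup>2 / 4" "(dist x y)\<^sup>2" "2 * Q"] by simp
  moreover have "3 * \<eta> \<le> \<delta>\<^sup>2 / (16 * Q)" "\<delta>\<^sup>2 / (8 * Q) = 2 * (\<delta>\<^sup>2 / (16 * Q))"
    using \<eta>(4) by simp_all
  ultimately show ?thesis
    using c'(2,3) unfolding y_def by linarith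
qed

section \<open>Sequences of perturbed projections\<close>

lemma step_le_max_imp_le_max:
  fixes r :: "nat \<Rightarrow> 'b::linorder"
  assumes "\<And>k. K \<le> k \<Longrightarrow> r (Suc k) \<le> max (r k) M" "K \<le> k"
  shows "r k \<le> max (r K) M"
  using assms(2)
proof (induction k rule: dec_induct)
  case (step k)
  then show ?case
    using assms(1)[of k] by (auto simp: max_def split: if_splits)
qed simp

lemma eventually_le_if_descent:
  fixes d :: "nat \<Rightarrow> real"
  assumes increment: "\<And>k. K \<le> k \<Longrightarrow> d (Suc k) \<le> d k + \<gamma>"
    and descent: "\<And>k. K \<le> k \<Longrightarrow> \<epsilon> < d k \<Longrightarrow> d (Suc k) \<le> d k - \<beta>"
    and "0 < \<beta>" "0 \<le> \<gamma>" "\<And>k. 0 \<le> d k"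
  shows "\<exists>K'. \<forall>k\<ge>K'. d k \<le> \<epsilon> + \<gamma>"
proof -
  have "\<exists>k\<ge>K. d k \<le> \<epsilon>"
  proof (rule ccontr)
    assume "\<not> ?thesis"
    then have big: "\<epsilon> < d k" if "K \<le> k" for k
      using that by force
    have decrease: "d (K + j) \<le> d K - real j * \<beta>" for j
    proof (induction j)
      case (Suc j)
      then show ?case
        using descent[of "K + j"] big[of "K + j"] by (simp add: algebra_simps)
    qed simp
    moreover obtain j :: nat where "d K < real j * \<beta>"
      using reals_Archimedean3[OF \<open>0 < \<beta>\<close>] by blast
    ultimately show False
      using decrease[of j] assms(5)[of "K + j"] by linarith
  qed
  then obtain K' where K': "K \<le> K'" "d K' \<le> \<epsilon>"
    by blast
  have "d k \<le> \<epsilon> + \<gamma>" if "K' \<le> k" for k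
    using that
  proof (induction k rule: dec_induct)
    case (step k)
    then show ?case
      using increment[of k] descent[of k] K'(1) \<open>0 < \<beta>\<close> by (cases "d k \<le> \<epsilon>") auto
  qed (use K' \<open>0 \<le> \<gamma>\<close> in simp)
  then show ?thesis
    by blast
qed

locale perturbed_projections =
  fixes C :: "'a::{real_inner,complete_space} set"
    and S T :: "nat \<Rightarrow> 'a set"
    and x :: "nat \<Rightarrow> 'a"
  assumes C_nonempty: "C \<noteq> {}"
    and C_bounded: "bounded C"
    and C_subset: "C \<subseteq> T k"
    and regular: "0 < \<epsilon> \<Longrightarrow>
      \<exists>\<delta>>0. \<forall>k z. max (infdist z (T k)) (infdist z (T (Suc k))) \<le> \<delta> \<longrightarrow> infdist z C \<le> \<epsilon>"
    and S_closed: "closed (S k)"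
    and S_convex: "convex (S k)"
    and S_nonempty: "S k \<noteq> {}"
    and x_Suc: "x (Suc k) = metric_proj (S (Suc k)) (x k)"
    and aw_dist_tendsto: "1 \<le> N \<Longrightarrow> (\<lambda>k. aw_dist N (S k) (T k)) \<longlonglongrightarrow> 0"
begin

lemma x_in_S: "1 \<le> k \<Longrightarrow> x k \<in> S k"
  by (cases k) (simp_all add: x_Suc metric_proj_in S_closed S_convex S_nonempty)

lemma eventually_S_near_T:
  assumes "1 \<le> N" "0 < \<eta>"
  shows "\<forall>\<^sub>F k in sequentially. x k \<in> S k \<and> aw_excess N (S k) (T k) < \<eta> \<and>
    (\<forall>c\<in>C. norm c \<le> real N \<longrightarrow> (\<exists>c'\<in>S k. dist c c' < \<eta>))"
  using order_tendstoD(2)[OF aw_dist_tendsto[OF assms(1)] assms(2)] eventually_ge_at_top[of 1]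
proof eventually_elim
  case (elim k)
  have "\<exists>c'\<in>S k. dist c c' < \<eta>" if "c \<in> C" "norm c \<le> real N" for c
  proof (rule infdist_lessE[OF S_nonempty])
    show "infdist c (S k) < \<eta>"
      using infdist_less_if_aw_dist_less[of N "T k" "S k"] elim(1) C_subset that
      by (auto simp: aw_dist_commute)
  qed blast
  then show ?case
    using elim x_in_S by (auto simp: aw_dist_def)
qed

lemma eventually_bounded: "\<exists>M. \<forall>\<^sub>F k in sequentially. norm (x k) \<le> M"
proof -
  obtain p where "p \<in> C"
    using C_nonempty by blast
  obtain R where R: "C \<subseteq> cball p R"
    using C_bounded unfolding bounded_any_center[of C p] by (auto simp: subset_iff)
  then have "0 \<le> R"
    using \<open>p \<in> C\<close> by auto
  obtain \<delta> where \<delta>: "0 < \<delta>"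
    and regular_\<delta>: "\<And>k. \<forall>z. max (infdist z (T k)) (infdist z (T (Suc k))) \<le> \<delta> \<longrightarrow> infdist z C \<le> 1"
    using regular[of 1] by auto
  define N where "N = nat \<lceil>norm p + R + 4\<rceil> + 1"
  have N: "1 \<le> N" "norm p + R + 4 \<le> real N"
    unfolding N_def by linarith+
  define \<eta> where "\<eta> = min (1/4) (min (\<delta>/6) ((\<delta> / (2 * (R + 3)))\<^sup>2 / 4))"
  have \<eta>: "0 < \<eta>" "\<eta> \<le> 1/4" "\<eta> \<le> \<delta>/6" "4 * \<eta> \<le> (\<delta> / (2 * (R + 3)))\<^sup>2"
    using \<delta> \<open>0 \<le> R\<close> by (auto simp: \<eta>_def)
  have "\<forall>\<^sub>F k in sequentially. dist (x (Suc k)) p \<le> max (dist (x k) p) (R + 5)"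
    using eventually_S_near_T[OF N(1) \<eta>(1)]
      eventually_sequentially_Suc[THEN iffD2, OF eventually_S_near_T[OF N(1) \<eta>(1)]]
  proof eventually_elim
    case (elim k)
    have "norm p \<le> real N"
      using N \<open>0 \<le> R\<close> by linarith
    then obtain p1 p2 where p12: "p1 \<in> S k" "dist p1 p \<le> \<eta>" "p2 \<in> S (Suc k)" "dist p2 p \<le> \<eta>"
      using elim \<open>p \<in> C\<close> by (metis dist_commute less_imp_le)
    show ?case
      using metric_proj_step_bounded[OF S_convex conjunct1[OF elim(1)] p12(1) S_closed S_convex
          S_nonempty p12(3) C_nonempty R regular_\<delta>[of k] _ _ p12(2,4) N(2) \<eta>(2-4)] elim
      by (simp add: x_Suc)
  qed
  then obtain K where "\<And>k. K \<le> k \<Longrightarrow> dist (x (Suc k)) p \<le> max (dist (x k) p) (R + 5)"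
    by (auto simp: eventually_sequentially)
  then have "dist (x k) p \<le> max (dist (x K) p) (R + 5)" if "K \<le> k" for k
    using that by (rule step_le_max_imp_le_max)
  then have "norm (x k) \<le> norm p + max (dist (x K) p) (R + 5)" if "K \<le> k" for k
    using that norm_triangle_sub[of "x k" p] by (fastforce simp: dist_norm)
  then show ?thesis
    by (auto simp: eventually_sequentially)
qed

lemma eventually_descent_step:
  assumes N: "1 \<le> N" "\<forall>\<^sub>F k in sequentially. norm (x k) \<le> real N"
      "\<And>c. c \<in> C \<Longrightarrow> norm c \<le> real N"
    and regular_\<delta>: "\<And>k. \<forall>z. max (infdist z (T k)) (infdist z (T (Suc k))) \<le> \<delta> \<longrightarrow>
      infdist z C \<le> \<epsilon>"
    and Q: "2 * real N + 1 \<le> Q"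
    and \<eta>: "0 < \<eta>" "\<eta> \<le> 1/2" "\<eta> \<le> \<delta>/2" "\<eta> \<le> \<delta>\<^sup>2 / (48 * Q)"
  shows "\<forall>\<^sub>F k in sequentially. infdist (x (Suc k)) C \<le> infdist (x k) C + 3 * \<eta> \<and>
    (\<epsilon> < infdist (x k) C \<longrightarrow> infdist (x (Suc k)) C \<le> infdist (x k) C - \<delta>\<^sup>2 / (16 * Q))"
  using eventually_S_near_T[OF N(1) \<eta>(1)] N(2)
    eventually_sequentially_Suc[THEN iffD2, OF eventually_S_near_T[OF N(1) \<eta>(1)]]
    eventually_sequentially_Suc[THEN iffD2, OF N(2)]
proof eventually_elim
  case (elim k)
  have near: "infdist (x k) (T k) \<le> \<eta>" "infdist (x (Suc k)) (T (Suc k)) \<le> \<eta>"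
    using elim infdist_le_aw_excess[of "x k" "S k" N "T k"]
      infdist_le_aw_excess[of "x (Suc k)" "S (Suc k)" N "T (Suc k)"] by auto
  have "\<forall>c\<in>C. \<exists>c'\<in>S (Suc k). dist c c' \<le> \<eta>"
    using elim N(3) by (meson less_imp_le)
  moreover have "infdist (x k) C + 1 \<le> Q"
  proof -
    obtain c where "c \<in> C"
      using C_nonempty by blast
    then have "infdist (x k) C \<le> norm (x k) + norm c"
      using infdist_le[of c C "x k"] norm_triangle_ineq4[of "x k" c] by (simp add: dist_norm)
    then show ?thesis
      using elim(2) N(3)[OF \<open>c \<in> C\<close>] Q by simp
  qed
  ultimately show ?case
    using metric_proj_infdist_le[OF S_closed S_convex S_nonempty C_nonempty \<eta>(1)]
      metric_proj_infdist_decrease[OF S_closed S_convex S_nonempty C_nonempty _ regular_\<delta>[of k]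
        near[unfolded x_Suc]] \<eta>
    by (simp add: x_Suc)
qed

lemma eventually_infdist_le:
  assumes "0 < \<epsilon>"
  shows "\<forall>\<^sub>F k in sequentially. infdist (x k) C \<le> \<epsilon>"
proof -
  obtain M where M: "\<forall>\<^sub>F k in sequentially. norm (x k) \<le> M"
    using eventually_bounded by blast
  obtain B where B: "\<And>c. c \<in> C \<Longrightarrow> norm c \<le> B"
    using C_bounded by (auto simp: bounded_iff)
  define N where "N = nat \<lceil>max M B\<rceil> + 1"
  have "1 \<le> N" "M \<le> real N" "B \<le> real N"
    unfolding N_def by linarith+
  then have N: "1 \<le> N" "\<forall>\<^sub>F k in sequentially. norm (x k) \<le> real N"
      "\<And>c. c \<in> C \<Longrightarrow> norm c \<le> real N"
    using M B by (auto elim: eventually_mono intro: order_trans)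
  obtain \<delta> where \<delta>: "0 < \<delta>" and regular_\<delta>:
      "\<And>k. \<forall>z. max (infdist z (T k)) (infdist z (T (Suc k))) \<le> \<delta> \<longrightarrow> infdist z C \<le> \<epsilon> / 2"
    using regular[of "\<epsilon> / 2"] assms by auto
  define Q where "Q = 2 * real N + 1"
  then have "0 < Q"
    by simp
  define \<eta> where "\<eta> = min (1/2) (min (\<delta>/2) (min (\<delta>\<^sup>2 / (48 * Q)) (\<epsilon>/6)))"
  have \<eta>: "0 < \<eta>" "\<eta> \<le> 1/2" "\<eta> \<le> \<delta>/2" "\<eta> \<le> \<delta>\<^sup>2 / (48 * Q)" "\<eta> \<le> \<epsilon>/6"
    using \<delta> assms \<open>0 < Q\<close> by (auto simp: \<eta>_def)
  obtain K where K: "\<And>k. K \<le> k \<Longrightarrow> infdist (x (Suc k)) C \<le> infdist (x k) C + 3 * \<eta> \<and>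
      (\<epsilon> / 2 < infdist (x k) C \<longrightarrow> infdist (x (Suc k)) C \<le> infdist (x k) C - \<delta>\<^sup>2 / (16 * Q))"
    using eventually_descent_step[OF N regular_\<delta> _ \<eta>(1-4)]
    by (auto simp: eventually_sequentially Q_def)
  have "0 < \<delta>\<^sup>2 / (16 * Q)" "0 \<le> 3 * \<eta>"
    using \<delta> \<eta>(1) \<open>0 < Q\<close> by simp_all
  then obtain K' where "\<forall>k\<ge>K'. infdist (x k) C \<le> \<epsilon> / 2 + 3 * \<eta>"
    using eventually_le_if_descent[where d = "\<lambda>k. infdist (x k) C",
        OF conjunct1[OF K] mp[OF conjunct2[OF K]] _ _ infdist_nonneg]
    by blast
  then have "\<forall>k\<ge>K'. infdist (x k) C \<le> \<epsilon>"
    using \<eta>(5) by fastforce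
  then show ?thesis
    by (auto simp: eventually_sequentially)
qed

lemma infdist_tendsto_0: "(\<lambda>k. infdist (x k) C) \<longlonglongrightarrow> 0"
proof (rule order_tendstoI)
  show "\<forall>\<^sub>F k in sequentially. a < infdist (x k) C" if "a < 0" for a
    using that by (intro always_eventually) (auto intro: less_le_trans[OF _ infdist_nonneg])
  show "\<forall>\<^sub>F k in sequentially. infdist (x k) C < a" if "0 < a" for a
    using eventually_infdist_le[of "a / 2"] that by (auto elim: eventually_mono)
qed

end

text \<open>The odd terms are shifted by one, so that interleave a b runs through
  a 0, b 1, a 1, b 2, ... in the order in which the scheme produces them.\<close>

definition interleave :: "(nat \<Rightarrow> 'a) \<Rightarrow> (nat \<Rightarrow> 'a) \<Rightarrow> nat \<Rightarrow> 'a" where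
  "interleave f g k = (if even k then f (k div 2) else g (Suc (k div 2)))"

lemma eventually_interleave:
  assumes "\<forall>\<^sub>F n in sequentially. P (f n)" "\<forall>\<^sub>F n in sequentially. P (g n)"
  shows "\<forall>\<^sub>F k in sequentially. P (interleave f g k)"
proof -
  obtain Nf Ng where "\<And>n. Nf \<le> n \<Longrightarrow> P (f n)" "\<And>n. Ng \<le> n \<Longrightarrow> P (g n)"
    using assms by (auto simp: eventually_sequentially)
  then have "P (interleave f g k)" if "2 * (Nf + Ng) \<le> k" for k
    using that by (auto simp: interleave_def)
  then show ?thesis
    by (auto simp: eventually_sequentially)
qed

lemma tendsto_interleave_iff:
  "interleave f g \<longlonglongrightarrow> l \<longleftrightarrow> f \<longlonglongrightarrow> l \<and> g \<longlonglongrightarrow> l"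
proof
  assume lim: "interleave f g \<longlonglongrightarrow> l"
  have "f = interleave f g \<circ> (\<lambda>n. 2 * n)" "(\<lambda>n. g (Suc n)) = interleave f g \<circ> (\<lambda>n. Suc (2 * n))"
    by (simp_all add: fun_eq_iff interleave_def)
  moreover have "strict_mono (\<lambda>n::nat. 2 * n)" "strict_mono (\<lambda>n::nat. Suc (2 * n))"
    by (simp_all add: strict_mono_def)
  ultimately show "f \<longlonglongrightarrow> l \<and> g \<longlonglongrightarrow> l"
    using LIMSEQ_subseq_LIMSEQ[OF lim] LIMSEQ_imp_Suc by metis
next
  assume "f \<longlonglongrightarrow> l \<and> g \<longlonglongrightarrow> l"
  then show "interleave f g \<longlonglongrightarrow> l"
    by (auto simp: tendsto_def intro: eventually_interleave)
qed

theorem corollary4p11: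
  fixes A B :: "'a::{real_inner, complete_space} set"
    and As Bs :: "nat \<Rightarrow> 'a set"
    and a b :: "nat \<Rightarrow> 'a"
  assumes "closed A" "convex A" "A \<noteq> {}"
    and "closed B" "convex B" "B \<noteq> {}"
    and "bounded (A \<inter> B)" "A \<inter> B \<noteq> {}"
    and "regular_couple A B"
    and "\<And>n. closed (As n) \<and> convex (As n) \<and> As n \<noteq> {}"
    and "\<And>n. closed (Bs n) \<and> convex (Bs n) \<and> Bs n \<noteq> {}"
    and "aw_converges As A" "aw_converges Bs B"
    and "\<And>n. n \<ge> 1 \<Longrightarrow> b n = metric_proj (Bs n) (a (n - 1))"
    and "\<And>n. n \<ge> 1 \<Longrightarrow> a n = metric_proj (As n) (b n)"
  shows "(\<lambda>n. infdist (a n) (A \<inter> B)) \<longlonglongrightarrow> 0 \<and>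
         (\<lambda>n. infdist (b n) (A \<inter> B)) \<longlonglongrightarrow> 0"
proof -
  define S T x where "S = interleave As Bs" and "T = interleave (\<lambda>_. A) (\<lambda>_. B)"
    and "x = interleave a b"
  have max_T: "max (infdist z (T k)) (infdist z (T (Suc k))) = max (infdist z A) (infdist z B)"
    for k z
    by (simp add: T_def interleave_def max.commute)
  interpret perturbed_projections "A \<inter> B" S T x
  proof
    show "A \<inter> B \<subseteq> T k" for k
      by (auto simp: T_def interleave_def)
    show "\<exists>\<delta>>0. \<forall>k z. max (infdist z (T k)) (infdist z (T (Suc k))) \<le> \<delta> \<longrightarrow> infdist z (A \<inter> B) \<le> \<epsilon>"
      if "0 < \<epsilon>" for \<epsilon>
      using assms(9) that unfolding regular_couple_def max_T by blast
    show "x (Suc k) = metric_proj (S (Suc k)) (x k)" for k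
      using assms(14,15) by (cases "even k") (simp_all add: x_def S_def interleave_def)
    show "(\<lambda>k. aw_dist N (S k) (T k)) \<longlonglongrightarrow> 0" if "1 \<le> N" for N
    proof -
      have "(\<lambda>k. aw_dist N (S k) (T k))
          = interleave (\<lambda>n. aw_dist N (As n) A) (\<lambda>n. aw_dist N (Bs n) B)"
        by (simp add: fun_eq_iff S_def T_def interleave_def)
      then show ?thesis
        using assms(12,13) that by (simp add: aw_converges_def tendsto_interleave_iff)
    qed
  qed (use assms(7,8,10,11) in \<open>simp_all add: S_def interleave_def\<close>)
  have "(\<lambda>k. infdist (x k) (A \<inter> B))
      = interleave (\<lambda>n. infdist (a n) (A \<inter> B)) (\<lambda>n. infdist (b n) (A \<inter> B))"
    by (simp add: fun_eq_iff x_def interleave_def)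
  then show ?thesis
    using infdist_tendsto_0 by (simp add: tendsto_interleave_iff)
qed

end
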